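(* Let $a,b,c$ be positive integers and define the formal power series \begin{alignat*}{2} F_p(x,y)&=\sum_{m,n\geq 0}\zeta_p(\{a\}^m,b,\{c\}^n)x^my^n, & G_p(y)&=\sum_{n\geq0}\zeta_p(\{c\}^n)y^n,\\ F^\star_p(x,y)&=\sum_{m,n\geq 0}\zeta^\star_p(\{c\}^m,b,\{a\}^n)x^my^n, & G^\star_p(y)&=\sum_{n\geq0}\zeta^\star_p(\{a\}^n)y^n. \end{alignat*} For $q\geq 1$ put \[T_q=\begin{pmatrix}1+\frac{x}{q^a} & \frac{1}{q^b}\\ 0 & 1+\frac{y}{q^c}\end{pmatrix},\qquad U_q=\Bigl(1-\frac{x}{q^c}\Bigr)^{-1}\Bigl(1-\frac{y}{q^a}\Bigr)^{-1}\begin{pmatrix}1-\frac{y}{q^a} & \frac{1}{q^b}\\ 0 & 1-\frac{x}{q^c}\end{pmatrix}.\] Then for every integer $p\geq 0$, \[\begin{pmatrix}F_p(x,y)\\ G_p(y)\end{pmatrix}=T_pT_{p-1}\cdots T_1\begin{pmatrix}0\\1\end{pmatrix},\qquad \begin{pmatrix}F^\star_p(x,y)\\ G^\star_p(y)\end{pmatrix}=U_pU_{p-1}\cdots U_1\begin{pmatrix}0\\1\end{pmatrix}\] (for $p=0$ the products are empty, i.e. the identity matrix).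
   Context: For an integer $p\geq 0$ and positive integers $k_1,\ldots,k_n$, the truncated sums are $\zeta_p(k_1,\ldots,k_n)=\sum_{p\geq p_1>p_2>\cdots>p_n>0}p_1^{-k_1}\cdots p_n^{-k_n}$ and $\zeta^\star_p(k_1,\ldots,k_n)=\sum_{p\geq p_1\geq p_2\geq\cdots\geq p_n\geq 1}p_1^{-k_1}\cdots p_n^{-k_n}$; empty sums are $0$, and for the empty index $\zeta_p(\varnothing)=\zeta^\star_p(\varnothing)=1$ (also when $p=0$). $\{a\}^m$ denotes $m$ copies of $a$. The factors $(1-x/q^c)^{-1}$ etc. are understood as formal power series. *)

theory Defs
  imports "HOL-Analysis.Analysis" "HOL-Computational_Algebra.Formal_Power_Series"
begin

definition zeta_tr :: "nat \<Rightarrow> nat list \<Rightarrow> real" where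
  "zeta_tr p ks = (\<Sum>ps \<in> {ps. length ps = length ks \<and> (\<forall>i<length ps. 0 < ps!i \<and> ps!i \<le> p)
                        \<and> sorted_wrt (>) ps}.
                     \<Prod>i<length ks. 1 / real (ps!i) ^ (ks!i))"

definition zetas_tr :: "nat \<Rightarrow> nat list \<Rightarrow> real" where
  "zetas_tr p ks = (\<Sum>ps \<in> {ps. length ps = length ks \<and> (\<forall>i<length ps. 1 \<le> ps!i \<and> ps!i \<le> p)
                        \<and> sorted_wrt (\<ge>) ps}.
                     \<Prod>i<length ks. 1 / real (ps!i) ^ (ks!i))"

text \<open>Bivariate formal power series in x, y: outer variable x, inner variable y.\<close>
type_synonym bfps = "real fps fps"

definition bX :: bfps where "bX = fps_X"
definition bY :: bfps where "bY = fps_const fps_X"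
definition bconst :: "real \<Rightarrow> bfps" where "bconst r = fps_const (fps_const r)"

definition bseries :: "(nat \<Rightarrow> nat \<Rightarrow> real) \<Rightarrow> bfps" where
  "bseries f = Abs_fps (\<lambda>m. Abs_fps (\<lambda>n. f m n))"

definition Fser :: "nat \<Rightarrow> nat \<Rightarrow> nat \<Rightarrow> nat \<Rightarrow> bfps" where
  "Fser a b c p = bseries (\<lambda>m n. zeta_tr p (replicate m a @ [b] @ replicate n c))"
definition Gser :: "nat \<Rightarrow> nat \<Rightarrow> bfps" where
  "Gser c p = bseries (\<lambda>m n. if m = 0 then zeta_tr p (replicate n c) else 0)"
definition Fsser :: "nat \<Rightarrow> nat \<Rightarrow> nat \<Rightarrow> nat \<Rightarrow> bfps" where
  "Fsser a b c p = bseries (\<lambda>m n. zetas_tr p (replicate m c @ [b] @ replicate n a))"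
definition Gsser :: "nat \<Rightarrow> nat \<Rightarrow> bfps" where
  "Gsser a p = bseries (\<lambda>m n. if m = 0 then zetas_tr p (replicate n a) else 0)"

definition Tmat :: "nat \<Rightarrow> nat \<Rightarrow> nat \<Rightarrow> nat \<Rightarrow> bfps^2^2" where
  "Tmat a b c q = vector [vector [1 + bX * bconst (1 / real q ^ a), bconst (1 / real q ^ b)],
                          vector [0, 1 + bY * bconst (1 / real q ^ c)]]"

definition Umat :: "nat \<Rightarrow> nat \<Rightarrow> nat \<Rightarrow> nat \<Rightarrow> bfps^2^2" where
  "Umat a b c q =
     (let s = inverse (1 - bX * bconst (1 / real q ^ c)) * inverse (1 - bY * bconst (1 / real q ^ a))
      in vector [vector [s * (1 - bY * bconst (1 / real q ^ a)), s * bconst (1 / real q ^ b)],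
                 vector [s * 0, s * (1 - bX * bconst (1 / real q ^ c))]])"

fun matprod_down :: "(nat \<Rightarrow> bfps^2^2) \<Rightarrow> nat \<Rightarrow> bfps^2^2" where
  "matprod_down M 0 = mat 1"
| "matprod_down M (Suc p) = M (Suc p) ** matprod_down M p"

end

theory Submission
  imports Defs
begin

text \<open>Splitting off the terms whose largest index equals \<open>p\<close> gives
  \<open>zeta_p(k, ks) = zeta_(p-1)(k, ks) + p^(-k) zeta_(p-1)(ks)\<close> and
  \<open>zeta*_p(k, ks) = zeta*_(p-1)(k, ks) + p^(-k) zeta*_p(ks)\<close>.
  Read coefficientwise on the generating series, the first says that \<open>(F_p, G_p) = T_p (F_(p-1), G_(p-1))\<close>;
  the second says that \<open>(F*_p, G*_p)\<close> solves the triangular system whose solution operator is \<open>U_p\<close>.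
  Induction on \<open>p\<close> from the column \<open>(0, 1)\<close> finishes the proof.\<close>

definition index_lists :: "(nat \<Rightarrow> nat \<Rightarrow> bool) \<Rightarrow> nat \<Rightarrow> nat \<Rightarrow> nat list set" where
  "index_lists R p n = {ps. length ps = n \<and> set ps \<subseteq> {1..p} \<and> sorted_wrt R ps}"

definition mzv_term :: "nat list \<Rightarrow> nat list \<Rightarrow> real" where
  "mzv_term ks ps = (\<Prod>i<length ks. 1 / real (ps!i) ^ (ks!i))"

lemma zeta_tr_eq_sum_index_lists: "zeta_tr p ks = sum (mzv_term ks) (index_lists (>) p (length ks))"
proof -
  have "{ps. length ps = length ks \<and> (\<forall>i<length ps. 0 < ps!i \<and> ps!i \<le> p) \<and> sorted_wrt (>) ps}
        = index_lists (>) p (length ks)"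
    unfolding index_lists_def by (auto simp: subset_iff in_set_conv_nth Suc_le_eq)
  then show ?thesis unfolding zeta_tr_def mzv_term_def by simp
qed

lemma zetas_tr_eq_sum_index_lists: "zetas_tr p ks = sum (mzv_term ks) (index_lists (\<ge>) p (length ks))"
proof -
  have "{ps. length ps = length ks \<and> (\<forall>i<length ps. 1 \<le> ps!i \<and> ps!i \<le> p) \<and> sorted_wrt (\<ge>) ps}
        = index_lists (\<ge>) p (length ks)"
    unfolding index_lists_def by (auto simp: subset_iff in_set_conv_nth)
  then show ?thesis unfolding zetas_tr_def mzv_term_def by simp
qed

lemma finite_index_lists: "finite (index_lists R p n)"
  by (rule finite_subset[OF _ finite_lists_length_eq[of "{1..p}" n]]) (auto simp: index_lists_def)

lemma index_lists_0_length: "index_lists R p 0 = {[]}"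
  by (auto simp: index_lists_def)

lemma index_lists_0_bound: "index_lists R 0 (Suc n) = {}"
  by (auto simp: index_lists_def length_Suc_conv)

lemma index_lists_Suc:
  assumes descending: "\<And>x y. R x y \<Longrightarrow> y \<le> x"
  shows "index_lists R (Suc p) (Suc n) =
     index_lists R p (Suc n) \<union> Cons (Suc p) ` {qs \<in> index_lists R (Suc p) n. \<forall>q\<in>set qs. R (Suc p) q}"
proof (intro equalityI subsetI)
  fix ps assume "ps \<in> index_lists R (Suc p) (Suc n)"
  then obtain q qs where ps: "ps = q # qs" and len: "length qs = n"
    and set: "set (q # qs) \<subseteq> {1..Suc p}" and sorted: "sorted_wrt R (q # qs)"
    unfolding index_lists_def by (auto simp: length_Suc_conv)
  show "ps \<in> index_lists R p (Suc n) \<union>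
      Cons (Suc p) ` {qs \<in> index_lists R (Suc p) n. \<forall>q\<in>set qs. R (Suc p) q}"
  proof (cases "q = Suc p")
    case True
    then have "qs \<in> {qs \<in> index_lists R (Suc p) n. \<forall>q\<in>set qs. R (Suc p) q}"
      using len set sorted by (simp add: index_lists_def)
    then show ?thesis using ps True by blast
  next
    case False
    then have "ps \<in> index_lists R p (Suc n)"
      using len set sorted ps descending by (fastforce simp: index_lists_def le_Suc_eq)
    then show ?thesis by blast
  qed
qed (auto simp: index_lists_def)

lemma sum_mzv_term_Suc:
  assumes "\<And>x y. R x y \<Longrightarrow> y \<le> x"
  shows "sum (mzv_term (k # ks)) (index_lists R (Suc p) (Suc (length ks))) =
     sum (mzv_term (k # ks)) (index_lists R p (Suc (length ks))) +
     1 / real (Suc p) ^ k *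
       sum (mzv_term ks) {qs \<in> index_lists R (Suc p) (length ks). \<forall>q\<in>set qs. R (Suc p) q}"
proof -
  have "index_lists R p (Suc (length ks)) \<inter> Cons (Suc p) ` A = {}" for A
    by (auto simp: index_lists_def)
  moreover have "mzv_term (k # ks) (Suc p # qs) = 1 / real (Suc p) ^ k * mzv_term ks qs" for qs
    unfolding mzv_term_def by (simp only: length_Cons prod.lessThan_Suc_shift) simp
  ultimately show ?thesis
    by (simp add: index_lists_Suc[OF assms] sum.union_disjoint finite_index_lists sum.reindex
        sum_distrib_left del: of_nat_Suc)
qed

lemma zeta_tr_Nil: "zeta_tr p [] = 1"
  by (simp add: zeta_tr_eq_sum_index_lists index_lists_0_length mzv_term_def)

lemma zetas_tr_Nil: "zetas_tr p [] = 1"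
  by (simp add: zetas_tr_eq_sum_index_lists index_lists_0_length mzv_term_def)

lemma zeta_tr_0: "ks \<noteq> [] \<Longrightarrow> zeta_tr 0 ks = 0"
  by (auto simp: neq_Nil_conv zeta_tr_eq_sum_index_lists index_lists_0_bound)

lemma zetas_tr_0: "ks \<noteq> [] \<Longrightarrow> zetas_tr 0 ks = 0"
  by (auto simp: neq_Nil_conv zetas_tr_eq_sum_index_lists index_lists_0_bound)

lemma zeta_tr_Suc_Cons:
  "zeta_tr (Suc p) (k # ks) = zeta_tr p (k # ks) + 1 / real (Suc p) ^ k * zeta_tr p ks"
proof -
  have "{qs \<in> index_lists (>) (Suc p) n. \<forall>q\<in>set qs. q < Suc p} = index_lists (>) p n" for n
    by (fastforce simp: index_lists_def less_Suc_eq_le)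
  then show ?thesis
    by (simp add: zeta_tr_eq_sum_index_lists sum_mzv_term_Suc[of "(>)"] del: of_nat_Suc)
qed

lemma zetas_tr_Suc_Cons:
  "zetas_tr (Suc p) (k # ks) = zetas_tr p (k # ks) + 1 / real (Suc p) ^ k * zetas_tr (Suc p) ks"
proof -
  have "{qs \<in> index_lists (\<ge>) (Suc p) n. \<forall>q\<in>set qs. q \<le> Suc p} = index_lists (\<ge>) (Suc p) n" for n
    by (auto simp: index_lists_def)
  then show ?thesis
    by (simp add: zetas_tr_eq_sum_index_lists sum_mzv_term_Suc[of "(\<ge>)"] del: of_nat_Suc)
qed

lemma bseries_nth [simp]: "fps_nth (fps_nth (bseries f) m) n = f m n"
  by (simp add: bseries_def)

lemma bfps_eqI: "(\<And>m n. fps_nth (fps_nth (A :: bfps) m) n = fps_nth (fps_nth B m) n) \<Longrightarrow> A = B"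
  by (rule fps_ext, rule fps_ext) simp

lemma bX_mult_nth [simp]: "fps_nth (fps_nth (bX * A) m) n = (if m = 0 then 0 else fps_nth (fps_nth A (m - 1)) n)"
  by (simp add: bX_def)

lemma bY_mult_nth [simp]: "fps_nth (fps_nth (bY * A) m) n = (if n = 0 then 0 else fps_nth (fps_nth A m) (n - 1))"
  by (simp add: bY_def)

lemma bconst_mult_nth [simp]: "fps_nth (fps_nth (bconst r * A) m) n = r * fps_nth (fps_nth A m) n"
  by (simp add: bconst_def)

lemma bfps_inverse_mult_cancel: "fps_nth (fps_nth (f :: bfps) 0) 0 \<noteq> 0 \<Longrightarrow> inverse f * f = 1"
  using fps_right_inverse[of f "inverse (fps_nth f 0)"] inverse_mult_eq_1'[of "fps_nth f 0"]
  by (simp add: fps_inverse_def mult.commute)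

lemma Fser_0: "Fser a b c 0 = 0"
  by (rule bfps_eqI) (simp add: Fser_def zeta_tr_0)

lemma Gser_0: "Gser c 0 = 1"
  by (rule bfps_eqI) (simp add: Gser_def zeta_tr_Nil zeta_tr_0)

lemma Fsser_0: "Fsser a b c 0 = 0"
  by (rule bfps_eqI) (simp add: Fsser_def zetas_tr_0)

lemma Gsser_0: "Gsser a 0 = 1"
  by (rule bfps_eqI) (simp add: Gsser_def zetas_tr_Nil zetas_tr_0)

lemma Fser_Suc:
  "Fser a b c (Suc p) =
     (1 + bX * bconst (1 / real (Suc p) ^ a)) * Fser a b c p + bconst (1 / real (Suc p) ^ b) * Gser c p"
  by (rule bfps_eqI, case_tac m)
     (simp_all add: Fser_def Gser_def ring_distribs mult.assoc zeta_tr_Suc_Cons del: of_nat_Suc fps_mult_nth_0)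

lemma Gser_Suc: "Gser c (Suc p) = (1 + bY * bconst (1 / real (Suc p) ^ c)) * Gser c p"
  by (rule bfps_eqI, case_tac n)
     (simp_all add: Gser_def ring_distribs mult.assoc zeta_tr_Suc_Cons zeta_tr_Nil del: of_nat_Suc fps_mult_nth_0)

lemma Fsser_Suc:
  "(1 - bX * bconst (1 / real (Suc p) ^ c)) * Fsser a b c (Suc p) =
     Fsser a b c p + bconst (1 / real (Suc p) ^ b) * Gsser a (Suc p)"
  by (rule bfps_eqI, case_tac m)
     (simp_all add: Fsser_def Gsser_def ring_distribs mult.assoc zetas_tr_Suc_Cons del: of_nat_Suc fps_mult_nth_0)

lemma Gsser_Suc: "(1 - bY * bconst (1 / real (Suc p) ^ a)) * Gsser a (Suc p) = Gsser a p"
  by (rule bfps_eqI, case_tac n)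
     (simp_all add: Gsser_def ring_distribs mult.assoc zetas_tr_Suc_Cons zetas_tr_Nil del: of_nat_Suc fps_mult_nth_0)

lemma matrix_vector_mult_2x2:
  "(vector [vector [a, b], vector [c, d]] :: 'a::semiring_1 ^2^2) *v vector [u, v] =
     vector [a * u + b * v, c * u + d * v]"
  by (simp add: vec_eq_iff forall_2 matrix_vector_mult_def sum_2)

lemma scaled_triangular_solve:
  fixes A B r f g f' g' :: "'a::{comm_ring_1, inverse}"
  assumes "inverse A * A = 1" "inverse B * B = 1"
    and "B * g' = g" "A * f' = f + r * g'"
  shows "(vector [f', g'] :: 'a^2) =
    (let s = inverse A * inverse B in vector [vector [s * B, s * r], vector [s * 0, s * A]] :: 'a^2^2)
      *v vector [f, g]"
proof -
  have g': "g' = inverse B * g"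
    by (metis assms(2,3) mult.assoc mult_1_left)
  have f': "f' = inverse A * (f + r * g')"
    by (metis assms(1,4) mult.assoc mult_1_left)
  have "inverse A * inverse B * B * f + inverse A * inverse B * r * g =
      inverse A * (inverse B * B) * f + inverse A * (r * (inverse B * g))"
    by (simp add: ac_simps)
  also have "\<dots> = f'"
    using assms(2) by (simp add: f' g' ring_distribs)
  finally have first: "inverse A * inverse B * B * f + inverse A * inverse B * r * g = f'" .
  have "inverse A * inverse B * A * g = (inverse A * A) * (inverse B * g)"
    by (simp add: ac_simps)
  then have second: "inverse A * inverse B * A * g = g'"
    using assms(1) by (simp add: g')
  show ?thesis
    by (simp add: Let_def matrix_vector_mult_2x2 first second)
qed

lemma Tmat_step:
  "vector [Fser a b c (Suc p), Gser c (Suc p)] = Tmat a b c (Suc p) *v vector [Fser a b c p, Gser c p]"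
  by (simp add: Tmat_def matrix_vector_mult_2x2 Fser_Suc Gser_Suc del: of_nat_Suc)

lemma Umat_step:
  "vector [Fsser a b c (Suc p), Gsser a (Suc p)] = Umat a b c (Suc p) *v vector [Fsser a b c p, Gsser a p]"
  unfolding Umat_def
  by (rule scaled_triangular_solve[OF _ _ Gsser_Suc Fsser_Suc];
      rule bfps_inverse_mult_cancel; simp del: fps_mult_nth_0 of_nat_Suc)

theorem lemma2p1:
  fixes a b c p :: nat
  assumes "a > 0" "b > 0" "c > 0"
  shows "(vector [Fser a b c p, Gser c p] :: bfps^2)
           = matprod_down (Tmat a b c) p *v vector [0, 1]
       \<and> (vector [Fsser a b c p, Gsser a p] :: bfps^2)
           = matprod_down (Umat a b c) p *v vector [0, 1]"
proof (induction p)
  case 0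
  then show ?case by (simp add: Fser_0 Gser_0 Fsser_0 Gsser_0)
next
  case (Suc p)
  then show ?case
    by (simp add: Tmat_step Umat_step matrix_vector_mul_assoc[symmetric] del: of_nat_Suc)
qed

end
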